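(* Let $F:\mathbb{R}^d\to\mathbb{R}$ be Lipschitz continuous with constant $L_0$, i.e. $|F(\theta_1)-F(\theta_2)|\le L_0\|\theta_1-\theta_2\|$ for all $\theta_1,\theta_2$. For $\eta>0$ define the Gaussian smoothing $$F_\eta(\theta)=\frac{1}{(2\pi)^{d/2}}\int_{\mathbb{R}^d}F(\theta+\eta v)\,e^{-\frac12\|v\|^2}\,dv=\mathbb{E}_v[F(\theta+\eta v)],$$ where $v\sim\mathcal{N}(0,I_d)$; $F_\eta$ is differentiable with $\nabla F_\eta(\theta)=\mathbb{E}_v\!\left[\frac{F(\theta+\eta v)-F(\theta)}{\eta}\,v\right]$. Then for any $\eta_1,\eta_2>0$ and any $\theta\in\mathbb{R}^d$, $$\|\nabla F_{\eta_2}(\theta)-\nabla F_{\eta_1}(\theta)\|\le\frac{2L_0\,d\,|\eta_2-\eta_1|}{\eta_2}.$$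
   Context: $\|\cdot\|$ denotes the Euclidean norm on $\mathbb{R}^d$, and $v$ is a standard Gaussian random vector in $\mathbb{R}^d$ (mean zero, identity covariance). *)

theory Defs
  imports "HOL-Analysis.Analysis"
begin

definition gauss_density :: "'a::euclidean_space \<Rightarrow> real" where
  "gauss_density v = (2 * pi) powr (- real DIM('a) / 2) * exp (- (norm v)\<^sup>2 / 2)"

definition gauss_smooth :: "('a::euclidean_space \<Rightarrow> real) \<Rightarrow> real \<Rightarrow> 'a \<Rightarrow> real" where
  "gauss_smooth F \<eta> \<theta> = (LINT v|lborel. F (\<theta> + \<eta> *\<^sub>R v) * gauss_density v)"

end

(*
  Only the existence of the two gradients is assumed, so the argument works with difference
  quotients instead of the integral formula for the gradient of a Gaussian smoothing.

  Put c = eta1 / eta2. Rescaling the argument of F around theta by c turns the eta1-smoothing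
  of F into the eta2-smoothing of F_c = F (theta + c (. - theta)), whose gradient at theta is
  c g1. Since F_c - F grows at most like L0 |c - 1| |y - theta| away from theta, it suffices to
  bound gradients of smoothings: if |G y - G x| <= K |y - x|, then the gradient of G_eta at x
  has norm at most K (d + 1) / 2. For this, G_eta (x + eta a) - G_eta x is the integral of
  (G (x + eta w) - G x) (phi (w - a) - phi w); by AM-GM the weight |w| |phi (w - a) - phi w| is
  controlled by the second moment d of phi and by the chi-square distance exp |a|^2 - 1
  between phi and its shift, which is O(|a|^2) as a tends to 0. Together with
  |g1| <= L0 (d + 1) / 2 this gives |g2 - g1| <= L0 |c - 1| (d + 1) <= 2 L0 d |c - 1|.
*)

theory Submission
  imports Defs "HOL-Probability.Distributions"
begin

section \<open>Moments and shifts of the standard Gaussian density\<close>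

lemma gauss_density_pos: "0 < gauss_density v"
  by (simp add: gauss_density_def)

lemma gauss_density_measurable [measurable]: "gauss_density \<in> borel_measurable borel"
  unfolding gauss_density_def[abs_def] by measurable

lemma power2_norm_eq_sum_Basis:
  fixes w :: "'a::euclidean_space"
  shows "(norm w)\<^sup>2 = (\<Sum>b\<in>Basis. (w \<bullet> b)\<^sup>2)"
  unfolding power2_norm_eq_inner by (subst euclidean_inner) (simp add: power2_eq_square)

lemma gauss_density_eq_prod:
  fixes w :: "'a::euclidean_space"
  shows "gauss_density w = (\<Prod>b\<in>Basis. std_normal_density (w \<bullet> b))"
proof -
  have "(1 / sqrt (2 * pi)) ^ DIM('a) = ((2 * pi) powr (- 1 / 2)) ^ DIM('a)"
    by (simp add: powr_minus_divide powr_half_sqrt)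
  also have "\<dots> = (2 * pi) powr (- real DIM('a) / 2)"
    by (subst powr_power) simp_all
  finally have "(2 * pi) powr (- real DIM('a) / 2) = (1 / sqrt (2 * pi)) ^ DIM('a)" ..
  moreover have "exp (- (norm w)\<^sup>2 / 2) = (\<Prod>b\<in>Basis. exp (- (w \<bullet> b)\<^sup>2 / 2))"
    by (simp add: power2_norm_eq_sum_Basis exp_sum[symmetric] sum_negf sum_divide_distrib)
  ultimately show ?thesis
    by (simp add: gauss_density_def std_normal_density_def prod_dividef power_one_over)
qed

lemma has_bochner_integral_gauss_coordinate_moment:
  fixes b :: "'a::euclidean_space"
  assumes b: "b \<in> Basis"
  shows "has_bochner_integral lborel (\<lambda>w::'a. gauss_density w * (w \<bullet> b) ^ (2 * k))
           (fact (2 * k) / (2 ^ k * fact k))"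
proof (rule has_bochner_integral_nn_integral)
  define m where "m b' = (if b' = b then k else 0)" for b' :: 'a
  have moment: "(\<integral>\<^sup>+x. ennreal (std_normal_density x * x ^ (2 * j)) \<partial>lborel)
      = ennreal (fact (2 * j) / (2 ^ j * fact j))" for j
    by (subst nn_integral_eq_integral)
       (auto simp: integrable_std_normal_moment integral_std_normal_moment_even
          normal_density_nonneg zero_le_even_power')
  have "(\<Prod>b'\<in>Basis. (w \<bullet> b') ^ (2 * m b')) = (w \<bullet> b) ^ (2 * k)" for w :: 'a
    using b by (simp add: m_def if_distrib prod.delta cong: if_cong)
  then have "ennreal (gauss_density w * (w \<bullet> b) ^ (2 * k))
      = (\<Prod>b'\<in>Basis. ennreal (std_normal_density (w \<bullet> b') * (w \<bullet> b') ^ (2 * m b')))" for w :: 'a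
    by (subst prod_ennreal)
       (simp_all add: gauss_density_eq_prod prod.distrib normal_density_nonneg zero_le_even_power')
  then have "(\<integral>\<^sup>+w. ennreal (gauss_density w * (w \<bullet> b) ^ (2 * k)) \<partial>lborel)
      = (\<integral>\<^sup>+w. (\<Prod>b'\<in>Basis. ennreal (std_normal_density (w \<bullet> b') * (w \<bullet> b') ^ (2 * m b'))) \<partial>lborel)"
    by simp
  also have "\<dots> = (\<Prod>b'\<in>Basis. \<integral>\<^sup>+x. ennreal (std_normal_density x * x ^ (2 * m b')) \<partial>lborel)"
    by (rule nn_integral_lborel_prod) auto
  also have "\<dots> = (\<Prod>b'\<in>Basis. ennreal (fact (2 * m b') / (2 ^ m b' * fact (m b'))))"
    by (simp only: moment)
  also have "\<dots> = ennreal (fact (2 * k) / (2 ^ k * fact k))"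
    by (subst prod.remove[OF finite_Basis b]) (simp add: m_def prod.neutral)
  finally show "(\<integral>\<^sup>+w. ennreal (gauss_density w * (w \<bullet> b) ^ (2 * k)) \<partial>lborel)
      = ennreal (fact (2 * k) / (2 ^ k * fact k))" .
qed (auto simp: gauss_density_pos less_imp_le zero_le_even_power')

lemma has_bochner_integral_gauss_density: "has_bochner_integral lborel gauss_density 1"
proof -
  obtain b :: 'a where "b \<in> Basis"
    using nonempty_Basis by blast
  from has_bochner_integral_gauss_coordinate_moment[OF this, of 0] show ?thesis
    by simp
qed

lemma has_bochner_integral_gauss_second_moment:
  "has_bochner_integral lborel (\<lambda>w::'a::euclidean_space. gauss_density w * (norm w)\<^sup>2) DIM('a)"
proof -
  have "has_bochner_integral lborel (\<lambda>w::'a. \<Sum>b\<in>Basis. gauss_density w * (w \<bullet> b) ^ (2 * 1))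
      (\<Sum>b\<in>(Basis::'a set). fact (2 * 1) / (2 ^ 1 * fact 1))"
    by (intro has_bochner_integral_sum has_bochner_integral_gauss_coordinate_moment)
  then show ?thesis
    by (simp add: power2_norm_eq_sum_Basis sum_distrib_left)
qed

lemma integrable_gauss_first_moment:
  "integrable lborel (\<lambda>w::'a::euclidean_space. gauss_density w * norm w)"
proof (rule Bochner_Integration.integrable_bound)
  show "integrable lborel (\<lambda>w::'a. gauss_density w + gauss_density w * (norm w)\<^sup>2)"
    using has_bochner_integral_gauss_density has_bochner_integral_gauss_second_moment
    by (intro Bochner_Integration.integrable_add) (auto simp: has_bochner_integral_iff)
  have pointwise: "norm (gauss_density w * norm w)
      \<le> norm (gauss_density w + gauss_density w * (norm w)\<^sup>2)" for w :: 'a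
  proof -
    have "0 \<le> (norm w - 1)\<^sup>2"
      by simp
    then have "2 * norm w \<le> 1 + (norm w)\<^sup>2"
      by (simp add: power2_diff)
    then have "norm w \<le> 1 + (norm w)\<^sup>2"
      using norm_ge_zero[of w] by linarith
    then have "gauss_density w * norm w \<le> gauss_density w * (1 + (norm w)\<^sup>2)"
      by (simp add: gauss_density_pos)
    then show ?thesis
      using gauss_density_pos[of w] by (simp add: abs_mult distrib_left)
  qed
  show "AE w in lborel. norm (gauss_density w * norm w)
      \<le> norm (gauss_density w + gauss_density w * (norm (w::'a))\<^sup>2)"
    using pointwise by simp
qed simp

lemma has_bochner_integral_lborel_translate_iff:
  fixes f :: "'a::euclidean_space \<Rightarrow> 'b::{banach, second_countable_topology}"
  assumes [measurable]: "f \<in> borel_measurable borel"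
  shows "has_bochner_integral lborel (\<lambda>w. f (c + w)) I \<longleftrightarrow> has_bochner_integral lborel f I"
  using integrable_distr_eq[of "(+) c" lborel borel f] integral_distr[of "(+) c" lborel borel f]
  by (simp add: has_bochner_integral_iff lborel_distr_plus)

lemma gauss_density_shift:
  fixes w a :: "'a::euclidean_space"
  shows "gauss_density (w - a) = gauss_density w * exp (w \<bullet> a - (norm a)\<^sup>2 / 2)"
proof -
  have "(norm (w - a))\<^sup>2 = (norm w)\<^sup>2 - 2 * (w \<bullet> a) + (norm a)\<^sup>2"
    by (simp add: dot_norm_neg field_simps)
  then show ?thesis
    by (simp add: gauss_density_def mult.assoc flip: exp_add)
qed

lemma has_bochner_integral_gauss_density_shift:
  "has_bochner_integral lborel (\<lambda>w. gauss_density (w - a)) 1"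
  using has_bochner_integral_lborel_translate_iff[of gauss_density "- a" 1]
    has_bochner_integral_gauss_density by simp

lemma gauss_density_shift_chi_square:
  fixes w a :: "'a::euclidean_space"
  shows "(gauss_density (w - a) - gauss_density w)\<^sup>2 / gauss_density w
    = exp ((norm a)\<^sup>2) * gauss_density (w - 2 *\<^sub>R a) - 2 * gauss_density (w - a) + gauss_density w"
proof -
  have "(gauss_density (w - a))\<^sup>2 / gauss_density w = exp ((norm a)\<^sup>2) * gauss_density (w - 2 *\<^sub>R a)"
    using gauss_density_pos[of w]
    by (simp add: gauss_density_shift[of w] power2_eq_square field_simps flip: exp_add)
  then show ?thesis
    using gauss_density_pos[of w] by (simp add: power2_diff power2_eq_square field_simps)
qed

lemma has_bochner_integral_gauss_chi_square:
  fixes a :: "'a::euclidean_space"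
  shows "has_bochner_integral lborel
    (\<lambda>w. (gauss_density (w - a) - gauss_density w)\<^sup>2 / gauss_density w) (exp ((norm a)\<^sup>2) - 1)"
proof -
  have "has_bochner_integral lborel
      (\<lambda>w. exp ((norm a)\<^sup>2) * gauss_density (w - 2 *\<^sub>R a) - 2 * gauss_density (w - a) + gauss_density w)
      (exp ((norm a)\<^sup>2) * 1 - 2 * 1 + 1)"
    by (intro has_bochner_integral_add has_bochner_integral_diff has_bochner_integral_mult_right
        has_bochner_integral_gauss_density_shift has_bochner_integral_gauss_density)
  then show ?thesis
    by (simp add: gauss_density_shift_chi_square)
qed

section \<open>Increments of Gaussian smoothings\<close>

lemma lipschitz_on_UNIV_borel_measurable:
  fixes G :: "'a::metric_space \<Rightarrow> 'b::metric_space"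
  assumes "L-lipschitz_on UNIV G"
  shows "G \<in> borel_measurable borel"
  using lipschitz_on_continuous_on[OF assms] by (rule borel_measurable_continuous_onI)

lemma increment_bound_nonneg:
  fixes G :: "'a::euclidean_space \<Rightarrow> real"
  assumes "\<forall>y. \<bar>G y - G x\<bar> \<le> K * norm (y - x)"
  shows "0 \<le> K"
proof -
  obtain b :: 'a where "b \<in> Basis"
    using nonempty_Basis by blast
  then have "\<bar>G (x + b) - G x\<bar> \<le> K"
    using assms by (metis add_diff_cancel_left' mult.right_neutral norm_Basis)
  then show ?thesis
    by (meson abs_ge_zero order_trans)
qed

lemma integrable_gauss_smooth:
  fixes G :: "'a::euclidean_space \<Rightarrow> real"
  assumes lip: "L-lipschitz_on UNIV G"
  shows "integrable lborel (\<lambda>v. G (x + \<eta> *\<^sub>R v) * gauss_density v)"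
proof (rule Bochner_Integration.integrable_bound)
  show "integrable lborel (\<lambda>v::'a. \<bar>G x\<bar> * gauss_density v + L * \<bar>\<eta>\<bar> * (gauss_density v * norm v))"
    using has_bochner_integral_gauss_density integrable_gauss_first_moment
    by (intro Bochner_Integration.integrable_add integrable_mult_right)
       (auto simp: has_bochner_integral_iff)
  have pointwise: "norm (G (x + \<eta> *\<^sub>R v) * gauss_density v)
      \<le> norm (\<bar>G x\<bar> * gauss_density v + L * \<bar>\<eta>\<bar> * (gauss_density v * norm v))" for v
  proof -
    have "\<bar>G (x + \<eta> *\<^sub>R v) - G x\<bar> \<le> L * (\<bar>\<eta>\<bar> * norm v)"
      using lipschitz_on_normD[OF lip, of "x + \<eta> *\<^sub>R v" x] by simp
    then have "\<bar>G (x + \<eta> *\<^sub>R v)\<bar> \<le> \<bar>G x\<bar> + L * \<bar>\<eta>\<bar> * norm v"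
      by linarith
    then have "gauss_density v * \<bar>G (x + \<eta> *\<^sub>R v)\<bar>
        \<le> gauss_density v * (\<bar>G x\<bar> + L * \<bar>\<eta>\<bar> * norm v)"
      by (rule mult_left_mono) (simp add: gauss_density_pos less_imp_le)
    moreover have "0 \<le> \<bar>G x\<bar> * gauss_density v + L * \<bar>\<eta>\<bar> * (gauss_density v * norm v)"
      using gauss_density_pos[of v] lipschitz_on_nonneg[OF lip] by simp
    ultimately show ?thesis
      using gauss_density_pos[of v] by (simp add: abs_mult algebra_simps)
  qed
  show "AE v in lborel. norm (G (x + \<eta> *\<^sub>R v) * gauss_density v)
      \<le> norm (\<bar>G x\<bar> * gauss_density v + L * \<bar>\<eta>\<bar> * (gauss_density (v::'a) * norm v))"
    using pointwise by simp
  show "(\<lambda>v. G (x + \<eta> *\<^sub>R v) * gauss_density v) \<in> borel_measurable lborel"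
    using lipschitz_on_UNIV_borel_measurable[OF lip] by measurable
qed

lemma has_bochner_integral_gauss_smooth_shift:
  fixes G :: "'a::euclidean_space \<Rightarrow> real"
  assumes lip: "L-lipschitz_on UNIV G"
  shows "has_bochner_integral lborel (\<lambda>w. G (x + \<eta> *\<^sub>R w) * gauss_density (w - a))
    (gauss_smooth G \<eta> (x + \<eta> *\<^sub>R a))"
proof -
  have [measurable]: "G \<in> borel_measurable borel"
    using lip by (rule lipschitz_on_UNIV_borel_measurable)
  have "has_bochner_integral lborel (\<lambda>v. G (x + \<eta> *\<^sub>R a + \<eta> *\<^sub>R v) * gauss_density v)
      (gauss_smooth G \<eta> (x + \<eta> *\<^sub>R a))"
    using integrable_gauss_smooth[OF lip] by (simp add: gauss_smooth_def has_bochner_integral_iff)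
  then show ?thesis
    using has_bochner_integral_lborel_translate_iff[of "\<lambda>w. G (x + \<eta> *\<^sub>R w) * gauss_density (w - a)" a]
    by (simp add: scaleR_add_right add.assoc)
qed

lemma has_bochner_integral_gauss_smooth_increment:
  fixes G :: "'a::euclidean_space \<Rightarrow> real"
  assumes lip: "L-lipschitz_on UNIV G"
  shows "has_bochner_integral lborel
    (\<lambda>w. (G (x + \<eta> *\<^sub>R w) - G x) * (gauss_density (w - a) - gauss_density w))
    (gauss_smooth G \<eta> (x + \<eta> *\<^sub>R a) - gauss_smooth G \<eta> x)"
proof -
  have "has_bochner_integral lborel
      (\<lambda>w. G (x + \<eta> *\<^sub>R w) * gauss_density (w - a) - G (x + \<eta> *\<^sub>R w) * gauss_density (w - 0)
        - G x * (gauss_density (w - a) - gauss_density w))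
      (gauss_smooth G \<eta> (x + \<eta> *\<^sub>R a) - gauss_smooth G \<eta> (x + \<eta> *\<^sub>R 0) - G x * (1 - 1))"
    by (intro has_bochner_integral_diff has_bochner_integral_mult_right
        has_bochner_integral_gauss_smooth_shift[OF lip] has_bochner_integral_gauss_density_shift
        has_bochner_integral_gauss_density)
  then show ?thesis
    by (simp add: algebra_simps)
qed

lemma mult_abs_le_weighted_squares:
  fixes n h p s :: real
  assumes "0 < p" "0 < s"
  shows "n * \<bar>h\<bar> \<le> (s * p * n\<^sup>2 + h\<^sup>2 / (p * s)) / 2"
proof -
  have "0 \<le> (s * p * n - \<bar>h\<bar>)\<^sup>2"
    by simp
  then have "2 * (s * p) * (n * \<bar>h\<bar>) \<le> (s * p) * (s * p * n\<^sup>2) + h\<^sup>2"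
    by (simp add: power2_eq_square algebra_simps)
  then show ?thesis
    using assms by (simp add: field_simps power2_eq_square)
qed

lemma gauss_smooth_increment_le:
  fixes G :: "'a::euclidean_space \<Rightarrow> real" and s :: real
  assumes lip: "L-lipschitz_on UNIV G"
    and bound: "\<forall>y. \<bar>G y - G x\<bar> \<le> K * norm (y - x)"
    and \<eta>: "0 < \<eta>" and s: "0 < s"
  shows "\<bar>gauss_smooth G \<eta> (x + \<eta> *\<^sub>R a) - gauss_smooth G \<eta> x\<bar>
    \<le> K * \<eta> / 2 * (s * real DIM('a) + (exp ((norm a)\<^sup>2) - 1) / s)"
proof -
  define h where "h w = gauss_density (w - a) - gauss_density w" for w
  define B where "B w = K * \<eta> / 2 * (s * (gauss_density w * (norm w)\<^sup>2) + (h w)\<^sup>2 / gauss_density w / s)"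
    for w
  have integral_B: "has_bochner_integral lborel B (K * \<eta> / 2 * (s * real DIM('a) + (exp ((norm a)\<^sup>2) - 1) / s))"
    unfolding B_def h_def
    by (intro has_bochner_integral_mult_right has_bochner_integral_add has_bochner_integral_divide_zero
        has_bochner_integral_gauss_second_moment has_bochner_integral_gauss_chi_square)
  have pointwise: "\<bar>(G (x + \<eta> *\<^sub>R w) - G x) * h w\<bar> \<le> B w" for w
  proof -
    have K: "0 \<le> K"
      using bound by (rule increment_bound_nonneg)
    have "\<bar>G (x + \<eta> *\<^sub>R w) - G x\<bar> \<le> K * \<eta> * norm w"
      using bound[rule_format, of "x + \<eta> *\<^sub>R w"] \<eta> by (simp add: mult.assoc)
    then have "\<bar>(G (x + \<eta> *\<^sub>R w) - G x) * h w\<bar> \<le> K * \<eta> * norm w * \<bar>h w\<bar>"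
      unfolding abs_mult by (rule mult_right_mono) simp
    also have "\<dots> = K * \<eta> * (norm w * \<bar>h w\<bar>)"
      by simp
    also have "\<dots> \<le> K * \<eta> * ((s * gauss_density w * (norm w)\<^sup>2 + (h w)\<^sup>2 / (gauss_density w * s)) / 2)"
      using K \<eta> s gauss_density_pos by (intro mult_left_mono mult_abs_le_weighted_squares) auto
    also have "\<dots> = B w"
      by (simp add: B_def field_simps)
    finally show ?thesis .
  qed
  have increment: "has_bochner_integral lborel (\<lambda>w. (G (x + \<eta> *\<^sub>R w) - G x) * h w)
      (gauss_smooth G \<eta> (x + \<eta> *\<^sub>R a) - gauss_smooth G \<eta> x)"
    unfolding h_def by (rule has_bochner_integral_gauss_smooth_increment[OF lip])
  then have "\<bar>gauss_smooth G \<eta> (x + \<eta> *\<^sub>R a) - gauss_smooth G \<eta> x\<bar>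
      = \<bar>\<integral>w. (G (x + \<eta> *\<^sub>R w) - G x) * h w \<partial>lborel\<bar>"
    by (simp add: has_bochner_integral_integral_eq)
  also have "\<dots> \<le> integral\<^sup>L lborel B"
    using increment integral_B pointwise
    by (intro integral_abs_bound_integral) (auto simp: has_bochner_integral_iff)
  also have "\<dots> = K * \<eta> / 2 * (s * real DIM('a) + (exp ((norm a)\<^sup>2) - 1) / s)"
    using integral_B by (rule has_bochner_integral_integral_eq)
  finally show ?thesis .
qed

section \<open>Gradients of Gaussian smoothings\<close>

lemma exp_minus_one_le: "exp x - 1 \<le> x * exp (x::real)"
proof -
  have "(1 - x) * exp x \<le> exp (- x) * exp x"
    using exp_ge_add_one_self[of "- x"] by (intro mult_right_mono) auto
  then show ?thesis
    by (simp add: exp_minus field_simps)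
qed

lemma gauss_smooth_gradient_inner_le:
  fixes G :: "'a::euclidean_space \<Rightarrow> real"
  assumes lip: "L-lipschitz_on UNIV G"
    and bound: "\<forall>y. \<bar>G y - G x\<bar> \<le> K * norm (y - x)"
    and \<eta>: "0 < \<eta>"
    and deriv: "(gauss_smooth G \<eta> has_derivative (\<lambda>h. g \<bullet> h)) (at x)"
    and u: "norm u = 1"
  shows "g \<bullet> u \<le> K * (real DIM('a) + 1) / 2"
proof -
  define f where "f t = gauss_smooth G \<eta> (x + t *\<^sub>R u)" for t
  define d where "d = real DIM('a)"
  have "((\<lambda>t. x + t *\<^sub>R u) has_derivative (\<lambda>t. t *\<^sub>R u)) (at 0)"
    by (auto intro!: derivative_eq_intros)
  from diff_chain_at[OF this, of "gauss_smooth G \<eta>" "\<lambda>h. g \<bullet> h"] deriv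
  have "(f has_derivative (\<lambda>t. t * (g \<bullet> u))) (at 0)"
    by (simp add: f_def[abs_def] o_def)
  then have "(f has_real_derivative g \<bullet> u) (at 0)"
    by (simp add: has_field_derivative_def mult_commute_abs)
  then have quotient: "((\<lambda>t. (f t - f 0) / t) \<longlongrightarrow> g \<bullet> u) (at_right 0)"
    by (simp add: DERIV_def filterlim_at_split)
  have bound_lim: "((\<lambda>t. K / 2 * (d + exp ((t / \<eta>)\<^sup>2))) \<longlongrightarrow> K / 2 * (d + exp ((0 / \<eta>)\<^sup>2))) (at_right 0)"
    using \<eta> by (intro tendsto_intros) auto
  have "(f t - f 0) / t \<le> K / 2 * (d + exp ((t / \<eta>)\<^sup>2))" if t: "0 < t" for t
  proof -
    define s where "s = t / \<eta>"
    have s: "0 < s" "t = \<eta> * s"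
      using t \<eta> by (auto simp: s_def)
    have "\<bar>f t - f 0\<bar> \<le> K * \<eta> / 2 * (s * d + (exp ((norm (s *\<^sub>R u))\<^sup>2) - 1) / s)"
      using gauss_smooth_increment_le[OF lip bound \<eta> s(1), of "s *\<^sub>R u"] s
      by (simp add: f_def d_def)
    also have "\<dots> = t * (K / 2 * (d + (exp (s\<^sup>2) - 1) / s\<^sup>2))"
      using s u \<eta> by (simp add: field_simps power2_eq_square)
    also have "\<dots> \<le> t * (K / 2 * (d + exp (s\<^sup>2)))"
      using exp_minus_one_le[of "s\<^sup>2"] s t increment_bound_nonneg[OF bound]
      by (intro mult_left_mono add_left_mono) (auto simp: divide_le_eq mult.commute)
    finally have "f t - f 0 \<le> t * (K / 2 * (d + exp (s\<^sup>2)))"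
      by (rule abs_le_D1)
    then show ?thesis
      using t by (simp add: s_def pos_divide_le_eq mult.commute)
  qed
  then have "g \<bullet> u \<le> K / 2 * (d + exp ((0 / \<eta>)\<^sup>2))"
    using eventually_at_right_less[of 0]
    by (intro tendsto_le[OF trivial_limit_at_right_real bound_lim quotient])
       (auto elim: eventually_mono)
  then show ?thesis
    by (simp add: d_def)
qed

lemma gauss_smooth_gradient_norm_le:
  fixes G :: "'a::euclidean_space \<Rightarrow> real"
  assumes lip: "L-lipschitz_on UNIV G"
    and bound: "\<forall>y. \<bar>G y - G x\<bar> \<le> K * norm (y - x)"
    and \<eta>: "0 < \<eta>"
    and deriv: "(gauss_smooth G \<eta> has_derivative (\<lambda>h. g \<bullet> h)) (at x)"
  shows "norm g \<le> K * (real DIM('a) + 1) / 2"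
proof (cases "g = 0")
  case True
  then show ?thesis
    using increment_bound_nonneg[OF bound] by simp
next
  case False
  then have "norm g = g \<bullet> (g /\<^sub>R norm g)"
    by (simp add: power2_norm_eq_inner[symmetric] power2_eq_square)
  also have "\<dots> \<le> K * (real DIM('a) + 1) / 2"
    using False by (intro gauss_smooth_gradient_inner_le[OF lip bound \<eta> deriv]) simp
  finally show ?thesis .
qed

lemma gauss_smooth_rescale:
  "gauss_smooth (\<lambda>y. F (x + c *\<^sub>R (y - x))) \<eta> = (\<lambda>y. gauss_smooth F (c * \<eta>) (x + c *\<^sub>R (y - x)))"
  unfolding gauss_smooth_def by (simp add: algebra_simps)

lemma has_derivative_gauss_smooth_rescale:
  assumes "(gauss_smooth F (c * \<eta>) has_derivative (\<lambda>h. g \<bullet> h)) (at x)"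
  shows "(gauss_smooth (\<lambda>y. F (x + c *\<^sub>R (y - x))) \<eta> has_derivative (\<lambda>h. (c *\<^sub>R g) \<bullet> h)) (at x)"
proof -
  have "((\<lambda>y. x + c *\<^sub>R (y - x)) has_derivative (\<lambda>h. c *\<^sub>R h)) (at x)"
    by (auto intro!: derivative_eq_intros)
  from diff_chain_at[OF this, of "gauss_smooth F (c * \<eta>)" "\<lambda>h. g \<bullet> h"] assms show ?thesis
    by (simp add: gauss_smooth_rescale o_def)
qed

lemma gauss_smooth_diff:
  fixes F G :: "'a::euclidean_space \<Rightarrow> real"
  assumes "L-lipschitz_on UNIV F" "M-lipschitz_on UNIV G"
  shows "gauss_smooth (\<lambda>y. F y - G y) \<eta> = (\<lambda>x. gauss_smooth F \<eta> x - gauss_smooth G \<eta> x)"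
  using integrable_gauss_smooth[OF assms(1)] integrable_gauss_smooth[OF assms(2)]
  by (simp add: gauss_smooth_def left_diff_distrib fun_eq_iff)

lemma gauss_smooth_gradient_rescale_le:
  fixes F :: "'a::euclidean_space \<Rightarrow> real"
  assumes lip: "L-lipschitz_on UNIV F" and \<eta>: "0 < \<eta>"
    and deriv_c: "(gauss_smooth F (c * \<eta>) has_derivative (\<lambda>h. g\<^sub>c \<bullet> h)) (at x)"
    and deriv: "(gauss_smooth F \<eta> has_derivative (\<lambda>h. g \<bullet> h)) (at x)"
  shows "norm (c *\<^sub>R g\<^sub>c - g) \<le> L * \<bar>c - 1\<bar> * (real DIM('a) + 1) / 2"
proof -
  define F\<^sub>c where "F\<^sub>c y = F (x + c *\<^sub>R (y - x))" for y
  have "\<bar>c\<bar>-lipschitz_on UNIV (\<lambda>y. x + c *\<^sub>R (y - x))"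
    by (intro lipschitz_onI) (auto simp: dist_norm simp flip: scaleR_diff_right)
  then have lip_c: "(L * \<bar>c\<bar>)-lipschitz_on UNIV F\<^sub>c"
    unfolding F\<^sub>c_def by (rule lipschitz_on_compose2) (rule lipschitz_on_subset[OF lip], simp)
  have "\<bar>(F\<^sub>c y - F y) - (F\<^sub>c x - F x)\<bar> \<le> L * \<bar>c - 1\<bar> * norm (y - x)" for y
  proof -
    have "\<bar>(F\<^sub>c y - F y) - (F\<^sub>c x - F x)\<bar> \<le> L * norm ((x + c *\<^sub>R (y - x)) - y)"
      using lipschitz_on_normD[OF lip, of "x + c *\<^sub>R (y - x)" y] by (simp add: F\<^sub>c_def)
    also have "(x + c *\<^sub>R (y - x)) - y = (c - 1) *\<^sub>R (y - x)"
      by (simp add: algebra_simps)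
    finally show ?thesis
      by (simp add: mult.assoc)
  qed
  moreover have "(gauss_smooth (\<lambda>y. F\<^sub>c y - F y) \<eta> has_derivative (\<lambda>h. (c *\<^sub>R g\<^sub>c - g) \<bullet> h)) (at x)"
    unfolding gauss_smooth_diff[OF lip_c lip]
    using has_derivative_diff[OF has_derivative_gauss_smooth_rescale[OF deriv_c] deriv]
    by (simp add: inner_diff_left F\<^sub>c_def[abs_def])
  ultimately show ?thesis
    using lipschitz_on_diff[OF lip_c lip] \<eta> by (intro gauss_smooth_gradient_norm_le) auto
qed

lemma gauss_smooth_gradient_dist_rescale_le:
  fixes F :: "'a::euclidean_space \<Rightarrow> real"
  assumes lip: "L-lipschitz_on UNIV F" and \<eta>: "0 < \<eta>" and c: "0 < c"
    and deriv_c: "(gauss_smooth F (c * \<eta>) has_derivative (\<lambda>h. g\<^sub>c \<bullet> h)) (at x)"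
    and deriv: "(gauss_smooth F \<eta> has_derivative (\<lambda>h. g \<bullet> h)) (at x)"
  shows "norm (g - g\<^sub>c) \<le> L * \<bar>c - 1\<bar> * (real DIM('a) + 1)"
proof -
  define d where "d = real DIM('a)"
  have norm_g\<^sub>c: "norm g\<^sub>c \<le> L * (d + 1) / 2"
    unfolding d_def using lip c \<eta>
    by (intro gauss_smooth_gradient_norm_le[OF lip _ _ deriv_c]) (auto dest: lipschitz_on_normD)
  have rescaled: "norm (c *\<^sub>R g\<^sub>c - g) \<le> L * \<bar>c - 1\<bar> * (d + 1) / 2"
    unfolding d_def by (rule gauss_smooth_gradient_rescale_le[OF lip \<eta> deriv_c deriv])
  have "g - g\<^sub>c = (c - 1) *\<^sub>R g\<^sub>c - (c *\<^sub>R g\<^sub>c - g)"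
    by (simp add: algebra_simps)
  then have "norm (g - g\<^sub>c) \<le> \<bar>c - 1\<bar> * norm g\<^sub>c + norm (c *\<^sub>R g\<^sub>c - g)"
    by (metis norm_scaleR norm_triangle_ineq4)
  also have "\<dots> \<le> \<bar>c - 1\<bar> * (L * (d + 1) / 2) + L * \<bar>c - 1\<bar> * (d + 1) / 2"
    using norm_g\<^sub>c rescaled by (intro add_mono mult_left_mono) auto
  also have "\<dots> = L * \<bar>c - 1\<bar> * (d + 1)"
    by (simp add: field_simps)
  finally show ?thesis
    by (simp add: d_def)
qed

theorem lemma2:
  fixes F :: "'a::euclidean_space \<Rightarrow> real"
    and L0 \<eta>1 \<eta>2 :: real
    and \<theta> g1 g2 :: 'a
  assumes lip: "\<forall>x y. \<bar>F x - F y\<bar> \<le> L0 * norm (x - y)"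
    and pos1: "\<eta>1 > 0" and pos2: "\<eta>2 > 0"
    and grad1: "(gauss_smooth F \<eta>1 has_derivative (\<lambda>h. g1 \<bullet> h)) (at \<theta>)"
    and grad2: "(gauss_smooth F \<eta>2 has_derivative (\<lambda>h. g2 \<bullet> h)) (at \<theta>)"
  shows "norm (g2 - g1) \<le> 2 * L0 * real DIM('a) * \<bar>\<eta>2 - \<eta>1\<bar> / \<eta>2"
proof -
  define c where "c = \<eta>1 / \<eta>2"
  have L0: "0 \<le> L0"
    using lip by (intro increment_bound_nonneg[of F \<theta>]) blast
  have "L0-lipschitz_on UNIV F"
    using lip L0 by (intro lipschitz_onI) (auto simp: dist_real_def dist_norm)
  moreover have "(gauss_smooth F (c * \<eta>2) has_derivative (\<lambda>h. g1 \<bullet> h)) (at \<theta>)"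
    using grad1 pos2 by (simp add: c_def)
  ultimately have "norm (g2 - g1) \<le> L0 * \<bar>c - 1\<bar> * (real DIM('a) + 1)"
    using pos1 pos2 grad2 by (intro gauss_smooth_gradient_dist_rescale_le) (auto simp: c_def)
  also have "\<dots> \<le> L0 * \<bar>c - 1\<bar> * (2 * real DIM('a))"
    using L0 by (intro mult_left_mono) (auto simp: DIM_positive Suc_le_eq)
  also have "c - 1 = (\<eta>1 - \<eta>2) / \<eta>2"
    using pos2 by (simp add: c_def field_simps)
  finally show ?thesis
    using pos2 by (simp add: abs_minus_commute mult_ac)
qed

end
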